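(* Let $\mathcal{C}$ be a simplicial complex on ground set $[n]$. Then $\mathcal{C}$ is unimodular if and only if its Alexander dual $\mathcal{C}^*$ is unimodular.
   Context: A simplicial complex on $[n]$ is a family of subsets of $[n]$ closed under subsets; facets are inclusion-maximal faces. $\mathcal{C}^*=\{S\subseteq[n]:[n]\setminus S\notin\mathcal{C}\}$, on ground set $[n]$. $\mathcal{A}_{\mathcal{C}}$ is the $0/1$ matrix with columns indexed by $\mathbf{i}\in\{1,2\}^n$ and rows indexed by pairs $(F,\mathbf{e})$ with $F$ a facet and $\mathbf{e}\in\{1,2\}^F$; entry $1$ iff $\mathbf{e}=\mathbf{i}|_F$. An integer matrix is unimodular if every circuit (nonzero integer kernel vector with coprime entries and inclusion-minimal support) has entries in $\{0,\pm1\}$. $\mathcal{C}$ is unimodular if $\mathcal{A}_{\mathcal{C}}$ is. *)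

theory Defs
  imports "HOL-Library.FuncSet"
begin

definition in_int_kernel :: "'r set \<Rightarrow> 'c set \<Rightarrow> ('r \<Rightarrow> 'c \<Rightarrow> int) \<Rightarrow> ('c \<Rightarrow> int) \<Rightarrow> bool" where
  "in_int_kernel R Cl a u \<longleftrightarrow>
     (\<forall>c. c \<notin> Cl \<longrightarrow> u c = 0) \<and> (\<forall>r\<in>R. (\<Sum>c\<in>Cl. a r c * u c) = 0)"

definition vec_support :: "'c set \<Rightarrow> ('c \<Rightarrow> int) \<Rightarrow> 'c set" where
  "vec_support Cl u = {c\<in>Cl. u c \<noteq> 0}"

definition is_circuit :: "'r set \<Rightarrow> 'c set \<Rightarrow> ('r \<Rightarrow> 'c \<Rightarrow> int) \<Rightarrow> ('c \<Rightarrow> int) \<Rightarrow> bool" where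
  "is_circuit R Cl a u \<longleftrightarrow>
     in_int_kernel R Cl a u \<and> vec_support Cl u \<noteq> {} \<and> Gcd (u ` Cl) = 1 \<and>
     (\<forall>v. in_int_kernel R Cl a v \<and> vec_support Cl v \<noteq> {} \<and> vec_support Cl v \<subseteq> vec_support Cl u
          \<longrightarrow> vec_support Cl v = vec_support Cl u)"

definition unimodular_matrix :: "'r set \<Rightarrow> 'c set \<Rightarrow> ('r \<Rightarrow> 'c \<Rightarrow> int) \<Rightarrow> bool" where
  "unimodular_matrix R Cl a \<longleftrightarrow>
     (\<forall>u. is_circuit R Cl a u \<longrightarrow> (\<forall>c. u c \<in> {-1, 0, 1}))"

definition simplicial_complex :: "nat \<Rightarrow> nat set set \<Rightarrow> bool" where
  "simplicial_complex n C \<longleftrightarrow>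
     (\<forall>F\<in>C. F \<subseteq> {1..n}) \<and> (\<forall>F\<in>C. \<forall>G. G \<subseteq> F \<longrightarrow> G \<in> C)"

definition facets :: "nat set set \<Rightarrow> nat set set" where
  "facets C = {F\<in>C. \<forall>G\<in>C. F \<subseteq> G \<longrightarrow> G = F}"

definition alexander_dual :: "nat \<Rightarrow> nat set set \<Rightarrow> nat set set" where
  "alexander_dual n C = {S. S \<subseteq> {1..n} \<and> {1..n} - S \<notin> C}"

definition cx_columns :: "nat \<Rightarrow> (nat \<Rightarrow> nat) set" where
  "cx_columns n = PiE {1..n} (\<lambda>_. {1, 2})"

definition cx_rows :: "nat set set \<Rightarrow> (nat set \<times> (nat \<Rightarrow> nat)) set" where
  "cx_rows C = {(F, e). F \<in> facets C \<and> e \<in> PiE F (\<lambda>_. {1, 2})}"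

definition cx_entry :: "nat set \<times> (nat \<Rightarrow> nat) \<Rightarrow> (nat \<Rightarrow> nat) \<Rightarrow> int" where
  "cx_entry r i = (if snd r = restrict i (fst r) then 1 else 0)"

definition unimodular_complex :: "nat \<Rightarrow> nat set set \<Rightarrow> bool" where
  "unimodular_complex n C \<longleftrightarrow> unimodular_matrix (cx_rows C) (cx_columns n) cx_entry"

end

theory Submission
  imports Defs
begin

text \<open>Write \<open>\<chi>\<^sub>S(i) = \<Prod>\<^sub>k\<^sub>\<in>\<^sub>S \<plusminus>1\<close> for the Walsh characters of \<open>{1,2}\<^sup>n\<close>. Expanding the indicator
  functions of the fibres of the restrictions to the facets in this basis shows that \<open>\<A>\<^sub>\<C>\<close> has
  the same integer kernel as the matrix with rows \<open>\<chi>\<^sub>S\<close>, \<open>S \<in> \<C>\<close>, and unimodularity only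
  depends on the kernel. The full character matrix is \<open>2\<^sup>n\<close> times an orthogonal matrix, so the
  kernels of a set of its rows and of the complementary rows are orthogonal complements, and,
  as for a regular matroid and its dual, one is unimodular iff the other is. Finally
  \<open>\<chi>\<^sub>T \<chi>\<^sub>[\<^sub>n\<^sub>] = \<chi>\<^sub>[\<^sub>n\<^sub>]\<^sub>-\<^sub>T\<close>, so after changing the signs of the coordinates by \<open>\<chi>\<^sub>[\<^sub>n\<^sub>]\<close> the rows
  complementary to \<open>\<C>\<close> become the rows of \<open>\<C>\<^sup>*\<close>.\<close>

lemma in_int_kernel_lincomb:
  assumes "in_int_kernel R Cl a u" "in_int_kernel R Cl a v"
  shows "in_int_kernel R Cl a (\<lambda>c. \<alpha> * u c + \<beta> * v c)"
proof -
  have "(\<Sum>c\<in>Cl. a r c * (\<alpha> * u c + \<beta> * v c))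
      = \<alpha> * (\<Sum>c\<in>Cl. a r c * u c) + \<beta> * (\<Sum>c\<in>Cl. a r c * v c)" for r
    by (simp add: algebra_simps sum.distrib sum_distrib_left)
  then show ?thesis using assms unfolding in_int_kernel_def by auto
qed

lemma unimodular_matrix_sign_twist:
  assumes twist: "\<And>x. in_int_kernel R Cl a x \<longleftrightarrow> in_int_kernel R' Cl a' (\<lambda>c. \<sigma> c * x c)"
    and sign: "\<And>c. \<sigma> c * \<sigma> c = (1::int)"
    and um: "unimodular_matrix R' Cl a'"
  shows "unimodular_matrix R Cl a"
  unfolding unimodular_matrix_def
proof (intro allI impI)
  fix u c assume u: "is_circuit R Cl a u"
  define u' where "u' c = \<sigma> c * u c" for c
  have "\<sigma> c = 1 \<or> \<sigma> c = -1" for c using sign[of c] by (simp add: square_eq_1_iff)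
  then have abs_sign: "\<bar>\<sigma> c\<bar> = 1" for c by (metis abs_minus_cancel abs_one)
  have twist_twice: "(\<lambda>c. \<sigma> c * (\<sigma> c * v c)) = v" for v
    by (simp add: mult.assoc[symmetric] sign)
  have "\<sigma> c \<noteq> 0" for c using sign[of c] by auto
  then have supp: "vec_support Cl (\<lambda>c. \<sigma> c * v c) = vec_support Cl v" for v
    by (simp add: vec_support_def)
  have "Gcd (u' ` Cl) = Gcd (u ` Cl)"
    by (subst (1 2) Gcd_abs_eq[symmetric]) (simp add: image_image u'_def abs_mult abs_sign)
  moreover have "vec_support Cl v = vec_support Cl u'"
    if "in_int_kernel R' Cl a' v" "vec_support Cl v \<noteq> {}" "vec_support Cl v \<subseteq> vec_support Cl u'" for v
  proof -
    have "in_int_kernel R Cl a (\<lambda>c. \<sigma> c * v c)"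
      using twist[of "\<lambda>c. \<sigma> c * v c"] that(1) by (simp add: twist_twice)
    moreover have "vec_support Cl u' = vec_support Cl u" unfolding u'_def by (rule supp)
    moreover have "\<And>v. in_int_kernel R Cl a v \<Longrightarrow> vec_support Cl v \<noteq> {} \<Longrightarrow>
        vec_support Cl v \<subseteq> vec_support Cl u \<Longrightarrow> vec_support Cl v = vec_support Cl u"
      using u unfolding is_circuit_def by blast
    ultimately show ?thesis using that(2,3) supp[of v] by metis
  qed
  ultimately have "is_circuit R' Cl a' u'"
    using u twist[of u] supp[of u] unfolding is_circuit_def u'_def by auto
  then have "u' c \<in> {-1, 0, 1}" using um unfolding unimodular_matrix_def by blast
  moreover have "u c = \<sigma> c * u' c" by (simp add: u'_def mult.assoc[symmetric] sign)
  ultimately show "u c \<in> {-1, 0, 1}" using abs_sign[of c] by (auto simp: abs_if split: if_splits)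
qed

lemma unimodular_matrix_sign_twist_iff:
  assumes "\<And>x. in_int_kernel R Cl a x \<longleftrightarrow> in_int_kernel R' Cl a' (\<lambda>c. \<sigma> c * x c)"
    and "\<And>c. \<sigma> c * \<sigma> c = (1::int)"
  shows "unimodular_matrix R Cl a \<longleftrightarrow> unimodular_matrix R' Cl a'"
proof -
  have "(\<lambda>c. \<sigma> c * (\<sigma> c * y c)) = y" for y
    by (simp add: mult.assoc[symmetric] assms(2))
  then have "in_int_kernel R' Cl a' y \<longleftrightarrow> in_int_kernel R Cl a (\<lambda>c. \<sigma> c * y c)" for y
    using assms(1)[of "\<lambda>c. \<sigma> c * y c"] by simp
  then show ?thesis
    using unimodular_matrix_sign_twist[OF assms] unimodular_matrix_sign_twist[of R' Cl a' R a \<sigma>] assms(2) by blast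
qed

lemma unimodular_matrix_kernel_cong:
  assumes "\<And>x. in_int_kernel R Cl a x \<longleftrightarrow> in_int_kernel R' Cl a' x"
  shows "unimodular_matrix R Cl a \<longleftrightarrow> unimodular_matrix R' Cl a'"
  using unimodular_matrix_sign_twist_iff[of R Cl a R' a' "\<lambda>_. 1"] assms by simp

definition minimal_kernel_vector :: "'r set \<Rightarrow> 'c set \<Rightarrow> ('r \<Rightarrow> 'c \<Rightarrow> int) \<Rightarrow> ('c \<Rightarrow> int) \<Rightarrow> bool" where
  "minimal_kernel_vector R Cl a u \<longleftrightarrow> in_int_kernel R Cl a u \<and>
     (\<forall>v. in_int_kernel R Cl a v \<and> vec_support Cl v \<noteq> {} \<and> vec_support Cl v \<subseteq> vec_support Cl u
          \<longrightarrow> vec_support Cl v = vec_support Cl u)"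

lemma minimal_kernel_vector_exists:
  assumes "finite Cl" "in_int_kernel R Cl a u" "u d \<noteq> 0"
  shows "\<exists>c. minimal_kernel_vector R Cl a c \<and> c d \<noteq> 0 \<and> vec_support Cl c \<subseteq> vec_support Cl u"
  using assms(2,3)
proof (induction "card (vec_support Cl u)" arbitrary: u rule: less_induct)
  case less
  show ?case
  proof (cases "minimal_kernel_vector R Cl a u")
    case True then show ?thesis using less.prems by auto
  next
    case False
    then obtain v where v: "in_int_kernel R Cl a v" "vec_support Cl v \<subset> vec_support Cl u"
      "vec_support Cl v \<noteq> {}"
      using less.prems unfolding minimal_kernel_vector_def by blast
    have fin: "finite (vec_support Cl u)" using assms(1) by (simp add: vec_support_def)
    obtain u' where u': "in_int_kernel R Cl a u'" "u' d \<noteq> 0" "vec_support Cl u' \<subset> vec_support Cl u"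
    proof (cases "v d = 0")
      case True
      text \<open>Cancel a coordinate \<open>k\<close> of \<open>u\<close> by a combination with \<open>v\<close>, keeping \<open>u' d = u d * v k \<noteq> 0\<close>.\<close>
      obtain k where k: "k \<in> vec_support Cl v" using v(3) by blast
      define u' where "u' = (\<lambda>c. v k * u c + (- u k) * v c)"
      have "vec_support Cl u' \<subseteq> vec_support Cl u - {k}"
        using v(2) by (auto simp: u'_def vec_support_def)
      moreover have "k \<in> vec_support Cl u" using k v(2) by auto
      ultimately have "vec_support Cl u' \<subset> vec_support Cl u" by blast
      moreover have "in_int_kernel R Cl a u'"
        unfolding u'_def using less.prems(1) v(1) by (rule in_int_kernel_lincomb)
      moreover have "u' d \<noteq> 0" using True less.prems(2) k by (auto simp: u'_def vec_support_def)
      ultimately show ?thesis using that by blast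
    qed (use v that in blast)
    then have "card (vec_support Cl u') < card (vec_support Cl u)"
      using fin by (simp add: psubset_card_mono)
    then show ?thesis using less.hyps[OF _ u'(1,2)] u'(3) by blast
  qed
qed

lemma circuit_of_minimal_kernel_vector:
  assumes min: "minimal_kernel_vector R Cl a u" and ne: "vec_support Cl u \<noteq> {}"
  obtains g u' where "g \<noteq> 0" "is_circuit R Cl a u'" "\<And>z. u z = g * u' z"
proof -
  have ker: "in_int_kernel R Cl a u" using min by (simp add: minimal_kernel_vector_def)
  define g where "g = Gcd (u ` Cl)"
  define u' where "u' z = u z div g" for z
  have g0: "g \<noteq> 0" using ne by (auto simp: g_def Gcd_0_iff vec_support_def)
  have "g dvd u z" for z
    using ker by (cases "z \<in> Cl") (auto simp: g_def in_int_kernel_def)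
  then have u: "u z = g * u' z" for z by (simp add: u'_def)
  have "g * (\<Sum>z\<in>Cl. a r z * u' z) = (\<Sum>z\<in>Cl. a r z * u z)" for r
    by (simp add: sum_distrib_left u algebra_simps)
  then have ker': "in_int_kernel R Cl a u'"
    using ker g0 unfolding in_int_kernel_def by (metis mult_eq_0_iff u)
  have supp: "vec_support Cl u' = vec_support Cl u"
    using g0 by (auto simp: vec_support_def u)
  have "Gcd (u' ` Cl) * g dvd u z" if "z \<in> Cl" for z
    unfolding u using that by (simp add: mult.commute mult_dvd_mono Gcd_dvd)
  then have "Gcd (u' ` Cl) * g dvd Gcd (u ` Cl)" by (intro Gcd_greatest) auto
  then have "Gcd (u' ` Cl) = 1"
    using g0 unfolding g_def[symmetric] by (metis Gcd_int_greater_eq_0 dvd_mult_cancel_right mult_1 zdvd1_eq abs_of_nonneg)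
  then have "is_circuit R Cl a u'"
    using ker' supp min ne unfolding is_circuit_def minimal_kernel_vector_def by auto
  with g0 u that show ?thesis by blast
qed

lemma unimodular_minimal_kernel_vector_abs_eq:
  assumes "unimodular_matrix R Cl a" "minimal_kernel_vector R Cl a u"
    and "x \<in> vec_support Cl u" "y \<in> vec_support Cl u"
  shows "\<bar>u x\<bar> = \<bar>u y\<bar>"
proof -
  obtain g u' where u': "is_circuit R Cl a u'" "\<And>z. u z = g * u' z"
    using circuit_of_minimal_kernel_vector assms(2,3) by blast
  have unit: "u' z \<in> {-1, 0, 1}" for z
    using assms(1) u'(1) unfolding unimodular_matrix_def by blast
  have "u' z \<noteq> 0 \<Longrightarrow> \<bar>u' z\<bar> = 1" for z using unit[of z] by auto
  then show ?thesis using assms(3,4) by (simp add: vec_support_def u'(2) abs_mult)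
qed

lemma unit_entries_if_Gcd_1_abs_eq:
  fixes u :: "'c \<Rightarrow> int"
  assumes zero: "\<forall>c. c \<notin> Cl \<longrightarrow> u c = 0" and gcd: "Gcd (u ` Cl) = 1"
    and abs_eq: "\<And>d e. d \<in> vec_support Cl u \<Longrightarrow> e \<in> vec_support Cl u \<Longrightarrow> \<bar>u d\<bar> = \<bar>u e\<bar>"
  shows "u c \<in> {-1, 0, 1}"
proof (cases "c \<in> vec_support Cl u")
  case True
  have "\<bar>u c\<bar> dvd u e" if "e \<in> Cl" for e
    using abs_eq[OF True, of e] that by (cases "u e = 0") (auto simp: vec_support_def)
  then have "\<bar>u c\<bar> dvd 1" unfolding gcd[symmetric] by (intro Gcd_greatest) auto
  then show ?thesis by (auto simp: abs_if split: if_splits)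
qed (use zero in \<open>auto simp: vec_support_def\<close>)

text \<open>A Fredholm alternative over \<open>\<int>\<close>.\<close>

lemma lattice_functional_coordinate_combination:
  fixes f :: "('a \<Rightarrow> int) \<Rightarrow> int"
  assumes "finite J"
    and closed: "\<And>x y \<alpha> \<beta>. P x \<Longrightarrow> P y \<Longrightarrow> P (\<lambda>c. \<alpha> * x c + \<beta> * y c)"
    and linear: "\<And>x y \<alpha> \<beta>. P x \<Longrightarrow> P y \<Longrightarrow> f (\<lambda>c. \<alpha> * x c + \<beta> * y c) = \<alpha> * f x + \<beta> * f y"
    and vanish: "\<And>x. P x \<Longrightarrow> \<forall>j\<in>J. x j = 0 \<Longrightarrow> f x = 0"
  shows "\<exists>m c. m \<noteq> 0 \<and> (\<forall>x. P x \<longrightarrow> m * f x = (\<Sum>j\<in>J. c j * x j))"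
  using assms(1) linear vanish
proof (induction J arbitrary: f rule: finite_induct)
  case empty
  then show ?case by (intro exI[of _ 1]) auto
next
  case (insert a J)
  show ?case
  proof (cases "\<exists>x0. P x0 \<and> (\<forall>j\<in>J. x0 j = 0) \<and> x0 a \<noteq> 0")
    case True
    then obtain x0 where x0: "P x0" "\<forall>j\<in>J. x0 j = 0" "x0 a \<noteq> 0" by blast
    text \<open>\<open>x0 a * x - x a * x0\<close> vanishes at \<open>a\<close>, so \<open>f'\<close> meets the hypothesis for \<open>J\<close>.\<close>
    define f' where "f' x = x0 a * f x - f x0 * x a" for x
    have "f' x = 0" if "P x" "\<forall>j\<in>J. x j = 0" for x
    proof -
      let ?y = "\<lambda>c. x0 a * x c + (- x a) * x0 c"
      have "P ?y" using closed that(1) x0(1) .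
      moreover have "\<forall>j\<in>insert a J. ?y j = 0" using that(2) x0(2) by simp
      ultimately have "f ?y = 0" using insert.prems(2) by blast
      then show ?thesis
        using insert.prems(1)[OF that(1) x0(1), of "x0 a" "- x a"] by (simp add: f'_def)
    qed
    moreover have "f' (\<lambda>c. \<alpha> * x c + \<beta> * y c) = \<alpha> * f' x + \<beta> * f' y" if "P x" "P y" for x y \<alpha> \<beta>
      using insert.prems(1) that by (simp add: f'_def algebra_simps)
    ultimately obtain m c where m: "m \<noteq> 0" and mc: "\<forall>x. P x \<longrightarrow> m * f' x = (\<Sum>j\<in>J. c j * x j)"
      using insert.IH by blast
    have "m * x0 a * f x = (\<Sum>j\<in>insert a J. (c(a := m * f x0)) j * x j)" if "P x" for x
    proof -
      have "(\<Sum>j\<in>insert a J. (c(a := m * f x0)) j * x j) = m * f x0 * x a + (\<Sum>j\<in>J. c j * x j)"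
        using insert.hyps by (auto intro!: sum.cong)
      then show ?thesis using mc that by (simp add: f'_def algebra_simps)
    qed
    then show ?thesis using m x0(3) by (intro exI[of _ "m * x0 a"]) auto
  next
    case False
    then have "P x \<Longrightarrow> \<forall>j\<in>J. x j = 0 \<Longrightarrow> f x = 0" for x
      using insert.prems(2)[of x] by auto
    then obtain m c where "m \<noteq> 0" "\<forall>x. P x \<longrightarrow> m * f x = (\<Sum>j\<in>J. c j * x j)"
      using insert.IH insert.prems(1) by blast
    moreover have "(\<Sum>j\<in>insert a J. (c(a := 0)) j * x j) = (\<Sum>j\<in>J. c j * x j)" for x
      using insert.hyps by (auto intro!: sum.cong)
    ultimately show ?thesis by metis
  qed
qed

locale scaled_orthogonal_matrix =
  fixes E :: "'c set" and K :: "'k set" and b :: "'k \<Rightarrow> 'c \<Rightarrow> int" and N :: int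
  assumes finite_columns: "finite E" and N_pos: "N > 0"
    and rows_orthogonal: "\<And>S T. S \<in> K \<Longrightarrow> T \<in> K \<Longrightarrow> (\<Sum>c\<in>E. b S c * b T c) = (if S = T then N else 0)"
    and columns_orthogonal: "\<And>i j. i \<in> E \<Longrightarrow> j \<in> E \<Longrightarrow> (\<Sum>S\<in>K. b S i * b S j) = (if i = j then N else 0)"
begin

lemma row_in_kernel_of_other_rows:
  assumes "K1 \<subseteq> K" "S \<in> K - K1"
  shows "in_int_kernel K1 E b (\<lambda>c. if c \<in> E then b S c else 0)"
proof -
  have "(\<Sum>c\<in>E. b T c * (if c \<in> E then b S c else 0)) = (\<Sum>c\<in>E. b T c * b S c)" for T
    by (rule sum.cong) auto
  then show ?thesis using assms rows_orthogonal by (auto simp: in_int_kernel_def)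
qed

lemma complementary_kernels_orthogonal:
  assumes "in_int_kernel K1 E b u" "in_int_kernel (K - K1) E b w"
  shows "(\<Sum>c\<in>E. u c * w c) = 0"
proof -
  have expand: "(\<Sum>d\<in>E. w d * (\<Sum>S\<in>K. b S c * b S d)) = N * w c" if "c \<in> E" for c
  proof -
    have "(\<Sum>d\<in>E. w d * (\<Sum>S\<in>K. b S c * b S d)) = (\<Sum>d\<in>E. if d = c then N * w c else 0)"
      using that columns_orthogonal by (intro sum.cong) auto
    then show ?thesis using that finite_columns by simp
  qed
  have "N * (\<Sum>c\<in>E. u c * w c) = (\<Sum>c\<in>E. u c * (N * w c))"
    by (simp add: sum_distrib_left algebra_simps)
  also have "\<dots> = (\<Sum>c\<in>E. u c * (\<Sum>d\<in>E. w d * (\<Sum>S\<in>K. b S c * b S d)))"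
    by (rule sum.cong) (simp_all add: expand)
  also have "\<dots> = (\<Sum>S\<in>K. \<Sum>c\<in>E. \<Sum>d\<in>E. (b S c * u c) * (b S d * w d))"
    by (simp add: sum_distrib_left sum.swap[of _ E K] algebra_simps)
  also have "\<dots> = (\<Sum>S\<in>K. (\<Sum>c\<in>E. b S c * u c) * (\<Sum>d\<in>E. b S d * w d))"
    by (simp add: sum_product)
  also have "\<dots> = 0"
    using assms unfolding in_int_kernel_def by (intro sum.neutral) (metis DiffI mult_eq_0_iff)
  finally show ?thesis using N_pos by simp
qed

lemma orthogonal_to_kernel_in_complement_kernel:
  assumes "K1 \<subseteq> K" "\<forall>c. c \<notin> E \<longrightarrow> \<psi> c = 0"
    and "\<And>x. in_int_kernel K1 E b x \<Longrightarrow> (\<Sum>c\<in>E. \<psi> c * x c) = 0"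
  shows "in_int_kernel (K - K1) E b \<psi>"
proof -
  have "(\<Sum>c\<in>E. b S c * \<psi> c) = 0" if "S \<in> K - K1" for S
  proof -
    have "(\<Sum>c\<in>E. b S c * \<psi> c) = (\<Sum>c\<in>E. \<psi> c * (if c \<in> E then b S c else 0))"
      by (rule sum.cong) auto
    then show ?thesis using assms(3)[OF row_in_kernel_of_other_rows[OF assms(1) that]] by simp
  qed
  then show ?thesis using assms(2) by (simp add: in_int_kernel_def)
qed

text \<open>Otherwise the coordinate \<open>x d\<close> would be a rational combination of the coordinates in
  \<open>supp w - {d, e}\<close> on the kernel, and that combination is a vector of the complementary
  kernel whose support violates the minimality of \<open>w\<close>.\<close>

lemma complement_circuit_separating_vector:
  assumes K1: "K1 \<subseteq> K" and w: "is_circuit (K - K1) E b w"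
    and d: "d \<in> vec_support E w" and e: "e \<in> vec_support E w" and "d \<noteq> e"
  shows "\<exists>v. in_int_kernel K1 E b v \<and> v d \<noteq> 0 \<and> (\<forall>j \<in> vec_support E w - {d, e}. v j = 0)"
proof (rule ccontr)
  define J where "J = vec_support E w - {d, e}"
  assume "\<not> ?thesis"
  then have "x d = 0" if "in_int_kernel K1 E b x" "\<forall>j\<in>J. x j = 0" for x
    using that unfolding J_def by blast
  moreover have "finite J" using finite_columns by (simp add: J_def vec_support_def)
  ultimately obtain m c where m: "m \<noteq> 0"
    and mc: "\<And>x. in_int_kernel K1 E b x \<Longrightarrow> m * x d = (\<Sum>j\<in>J. c j * x j)"
    using lattice_functional_coordinate_combination[of J "in_int_kernel K1 E b" "\<lambda>x. x d"]
      in_int_kernel_lincomb by blast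
  define \<psi> where "\<psi> y = (if y = d then m else if y \<in> J then - c y else 0)" for y
  have dJ: "d \<in> E" "d \<notin> J" "J \<subseteq> E" using d by (auto simp: J_def vec_support_def)
  have "(\<Sum>y\<in>E. \<psi> y * x y) = 0" if "in_int_kernel K1 E b x" for x
  proof -
    have "(\<Sum>y\<in>E. \<psi> y * x y) = (\<Sum>y\<in>insert d J. \<psi> y * x y)"
      using finite_columns dJ by (intro sum.mono_neutral_right) (auto simp: \<psi>_def)
    also have "\<dots> = m * x d + (\<Sum>y\<in>J. - c y * x y)"
      using dJ \<open>finite J\<close> by (simp add: \<psi>_def) (auto intro!: sum.cong)
    finally show ?thesis using mc[OF that] by (simp add: sum_negf)
  qed
  then have "in_int_kernel (K - K1) E b \<psi>"
    using dJ by (intro orthogonal_to_kernel_in_complement_kernel[OF K1]) (auto simp: \<psi>_def)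
  moreover have "d \<in> vec_support E \<psi>" "vec_support E \<psi> \<subseteq> vec_support E w"
    using d m by (auto simp: vec_support_def \<psi>_def J_def)
  ultimately have "vec_support E \<psi> = vec_support E w"
    using w unfolding is_circuit_def by blast
  moreover have "e \<notin> vec_support E \<psi>" using \<open>d \<noteq> e\<close> by (auto simp: vec_support_def \<psi>_def J_def)
  ultimately show False using e by blast
qed

lemma complement_circuit_abs_eq:
  assumes K1: "K1 \<subseteq> K" and um: "unimodular_matrix K1 E b" and w: "is_circuit (K - K1) E b w"
    and d: "d \<in> vec_support E w" and e: "e \<in> vec_support E w"
  shows "\<bar>w d\<bar> = \<bar>w e\<bar>"
proof (cases "d = e")
  case False
  text \<open>A minimal kernel vector \<open>c\<close> of the rows \<open>K1\<close> inside the separating vector is orthogonal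
    to \<open>w\<close>, so \<open>c d * w d + c e * w e = 0\<close>, while \<open>\<bar>c d\<bar> = \<bar>c e\<bar>\<close> by unimodularity.\<close>
  obtain v where v: "in_int_kernel K1 E b v" "v d \<noteq> 0" "\<forall>j \<in> vec_support E w - {d, e}. v j = 0"
    using complement_circuit_separating_vector[OF K1 w d e False] by blast
  from minimal_kernel_vector_exists[OF finite_columns v(1,2)]
  obtain c where c: "minimal_kernel_vector K1 E b c" "c d \<noteq> 0" "vec_support E c \<subseteq> vec_support E v"
    by (elim exE conjE)
  have kc: "in_int_kernel K1 E b c" using c(1) by (simp add: minimal_kernel_vector_def)
  have kw: "in_int_kernel (K - K1) E b w" using w by (simp add: is_circuit_def)
  have dE: "d \<in> E" "e \<in> E" "w d \<noteq> 0" "w e \<noteq> 0" using d e by (auto simp: vec_support_def)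
  have "c y * w y = 0" if "y \<in> E - {d, e}" for y
  proof (rule ccontr)
    assume "c y * w y \<noteq> 0"
    then have "y \<in> vec_support E c" "y \<in> vec_support E w - {d, e}"
      using that by (auto simp: vec_support_def)
    then show False using v(3) c(3) by (auto simp: vec_support_def)
  qed
  then have "(\<Sum>y\<in>E. c y * w y) = (\<Sum>y\<in>{d, e}. c y * w y)"
    using finite_columns dE(1,2) by (intro sum.mono_neutral_right) auto
  then have sum0: "c d * w d = - (c e * w e)"
    using complementary_kernels_orthogonal[OF kc kw] False by simp
  then have "c e \<noteq> 0" using c(2) dE(3) by auto
  then have "\<bar>c d\<bar> = \<bar>c e\<bar>"
    using unimodular_minimal_kernel_vector_abs_eq[OF um c(1), of d e] c(2) dE(1,2)
    by (simp add: vec_support_def)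
  moreover have "\<bar>c d\<bar> * \<bar>w d\<bar> = \<bar>c e\<bar> * \<bar>w e\<bar>"
    using arg_cong[OF sum0, of abs] by (simp add: abs_mult)
  ultimately show ?thesis using c(2) \<open>c e \<noteq> 0\<close> by simp
qed simp

theorem unimodular_matrix_complement:
  assumes "K1 \<subseteq> K" "unimodular_matrix K1 E b"
  shows "unimodular_matrix (K - K1) E b"
  unfolding unimodular_matrix_def
proof (intro allI impI)
  fix w c assume w: "is_circuit (K - K1) E b w"
  show "w c \<in> {-1, 0, 1}"
  proof (rule unit_entries_if_Gcd_1_abs_eq[where Cl = E])
    show "\<forall>c. c \<notin> E \<longrightarrow> w c = 0" "Gcd (w ` E) = 1"
      using w by (auto simp: is_circuit_def in_int_kernel_def)
  qed (rule complement_circuit_abs_eq[OF assms w])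
qed

end

definition label_sign :: "nat \<Rightarrow> int" where
  "label_sign l = (if l = 1 then 1 else -1)"

definition character :: "nat set \<Rightarrow> (nat \<Rightarrow> nat) \<Rightarrow> int" where
  "character S i = (\<Prod>k\<in>S. label_sign (i k))"

lemma character_cases: "character S i = 1 \<or> character S i = -1"
  unfolding character_def
proof (induction S rule: infinite_finite_induct)
  case (insert x F) then show ?case by (auto simp: label_sign_def)
qed auto

lemma character_mult_self [simp]: "character S i * character S i = 1"
  using character_cases[of S i] by auto

lemma character_mult_complement:
  assumes "T \<subseteq> A" "finite A"
  shows "character T i * character A i = character (A - T) i"
proof -
  have "character A i = character (A - T) i * character T i"
    unfolding character_def using assms by (intro prod.subset_diff) auto
  then show ?thesis by (metis character_mult_self mult.assoc mult.commute mult_1_right)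
qed

lemma sum_Pow_character_mult:
  assumes "finite A" "\<forall>k\<in>A. i k \<in> {1, 2}" "\<forall>k\<in>A. j k \<in> {1, 2}"
  shows "(\<Sum>T\<in>Pow A. character T i * character T j) = (if \<forall>k\<in>A. i k = j k then 2 ^ card A else 0)"
proof -
  define t where "t k = label_sign (i k) * label_sign (j k)" for k
  have "(\<Sum>T\<in>Pow A. character T i * character T j) = (\<Sum>T\<in>Pow A. (\<Prod>k\<in>T. t k) * (\<Prod>k\<in>A-T. 1))"
    by (simp add: character_def t_def prod.distrib)
  also have "\<dots> = (\<Prod>k\<in>A. t k + 1)"
    by (rule prod_add[symmetric]) (use assms in auto)
  also have "\<dots> = (\<Prod>k\<in>A. if i k = j k then 2 else 0)"
  proof (rule prod.cong)
    fix k assume "k \<in> A"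
    then have "i k \<in> {1, 2}" "j k \<in> {1, 2}" using assms(2,3) by auto
    then show "t k + 1 = (if i k = j k then 2 else 0)" by (auto simp: t_def label_sign_def)
  qed simp
  also have "\<dots> = (if \<forall>k\<in>A. i k = j k then 2 ^ card A else 0)"
    using assms(1) by (auto intro!: prod_zero)
  finally show ?thesis .
qed

lemma finite_cx_columns: "finite (cx_columns n)"
  by (simp add: cx_columns_def finite_PiE)

lemma sum_cx_columns_character_mult:
  assumes "S \<subseteq> {1..n}" "T \<subseteq> {1..n}"
  shows "(\<Sum>i\<in>cx_columns n. character S i * character T i) = (if S = T then 2 ^ n else 0)"
proof -
  define h where "h k l = (if k \<in> S then label_sign l else 1) * (if k \<in> T then label_sign l else 1)" for k l
  have "character S i * character T i = (\<Prod>k\<in>{1..n}. h k (i k))" for i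
    using assms by (simp add: character_def h_def prod.distrib prod.If_cases Int_absorb1)
  then have "(\<Sum>i\<in>cx_columns n. character S i * character T i) = (\<Sum>i\<in>cx_columns n. \<Prod>k\<in>{1..n}. h k (i k))"
    by simp
  also have "\<dots> = (\<Prod>k\<in>{1..n}. \<Sum>l\<in>{1, 2}. h k l)"
    unfolding cx_columns_def by (rule prod_sum_PiE[symmetric]) auto
  also have "\<dots> = (\<Prod>k\<in>{1..n}. if k \<in> S \<longleftrightarrow> k \<in> T then 2 else 0)"
    by (rule prod.cong) (auto simp: h_def label_sign_def)
  also have "\<dots> = (if S = T then 2 ^ n else 0)"
    using assms by (auto intro!: prod_zero)
  finally show ?thesis .
qed

lemma scaled_orthogonal_matrix_characters:
  "scaled_orthogonal_matrix (cx_columns n) (Pow {1..n}) character (2 ^ n)"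
proof
  fix i j assume "i \<in> cx_columns n" "j \<in> cx_columns n"
  moreover from this have "(\<forall>k\<in>{1..n}. i k = j k) \<longleftrightarrow> i = j"
    unfolding cx_columns_def by (auto intro: PiE_ext)
  ultimately show "(\<Sum>S\<in>Pow {1..n}. character S i * character S j) = (if i = j then 2 ^ n else 0)"
    using sum_Pow_character_mult[of "{1..n}" i j] by (auto simp: cx_columns_def PiE_iff)
qed (auto simp: finite_cx_columns sum_cx_columns_character_mult)

lemma simplicial_complex_subset_Pow: "simplicial_complex n C \<Longrightarrow> C \<subseteq> Pow {1..n}"
  by (auto simp: simplicial_complex_def)

lemma facet_containing:
  assumes "simplicial_complex n C" "S \<in> C"
  obtains F where "F \<in> facets C" "S \<subseteq> F"
proof -
  have "finite C"
    using simplicial_complex_subset_Pow[OF assms(1)] by (rule finite_subset) simp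
  then have "finite {G\<in>C. S \<subseteq> G}" by simp
  from finite_has_maximal2[OF this, of S] assms(2)
  obtain F where "F \<in> C" "S \<subseteq> F" "\<forall>G\<in>{G\<in>C. S \<subseteq> G}. F \<subseteq> G \<longrightarrow> F = G"
    by auto
  then have "F \<in> facets C" by (auto simp: facets_def)
  then show thesis using \<open>S \<subseteq> F\<close> by (rule that)
qed

lemma sum_cx_entry_mult:
  "(\<Sum>i\<in>cx_columns n. cx_entry (F, e) i * x i) = (\<Sum>i\<in>{i\<in>cx_columns n. restrict i F = e}. x i)"
  unfolding sum.inter_filter[OF finite_cx_columns] by (rule sum.cong) (auto simp: cx_entry_def)

text \<open>A face \<open>S\<close> lies in a facet \<open>F\<close>, and \<open>\<chi>\<^sub>S\<close> is constant on each fibre of the restriction to \<open>F\<close>;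
  so the row \<open>\<chi>\<^sub>S\<close> is a combination of the rows \<open>(F, e)\<close> of \<open>\<A>\<^sub>\<C>\<close>.\<close>

lemma character_kernel_if_cx_kernel:
  assumes sc: "simplicial_complex n C" and x: "in_int_kernel (cx_rows C) (cx_columns n) cx_entry x"
  shows "in_int_kernel C (cx_columns n) character x"
  unfolding in_int_kernel_def
proof (intro conjI ballI)
  fix S assume "S \<in> C"
  then obtain F where F: "F \<in> facets C" "S \<subseteq> F" using facet_containing[OF sc] by blast
  have "F \<subseteq> {1..n}" using F sc by (auto simp: facets_def simplicial_complex_def)
  define fibre where "fibre e = {i\<in>cx_columns n. restrict i F = e}" for e
  let ?T = "PiE F (\<lambda>_. {1::nat, 2})"
  have img: "(\<lambda>i. restrict i F) ` cx_columns n \<subseteq> ?T"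
    using \<open>F \<subseteq> {1..n}\<close> by (auto simp: cx_columns_def PiE_iff)
  have fin: "finite ?T"
    using \<open>F \<subseteq> {1..n}\<close> by (intro finite_PiE) (auto intro: finite_subset)
  have "(\<Sum>i\<in>cx_columns n. character S i * x i) = (\<Sum>e\<in>?T. \<Sum>i\<in>fibre e. character S i * x i)"
    unfolding fibre_def by (rule sum.group[OF finite_cx_columns fin img, symmetric])
  also have "\<dots> = (\<Sum>e\<in>?T. character S e * (\<Sum>i\<in>fibre e. x i))"
  proof (rule sum.cong[OF refl])
    fix e
    have "character S i = character S e" if "i \<in> fibre e" for i
      unfolding character_def using that F(2) by (intro prod.cong) (auto simp: fibre_def)
    then show "(\<Sum>i\<in>fibre e. character S i * x i) = character S e * (\<Sum>i\<in>fibre e. x i)"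
      by (simp add: sum_distrib_left)
  qed
  also have "\<dots> = 0"
  proof (rule sum.neutral, rule ballI)
    fix e assume "e \<in> ?T"
    then have "(F, e) \<in> cx_rows C" using F by (simp add: cx_rows_def)
    then have "(\<Sum>i\<in>cx_columns n. cx_entry (F, e) i * x i) = 0"
      using x by (simp add: in_int_kernel_def)
    then show "character S e * (\<Sum>i\<in>fibre e. x i) = 0"
      by (simp add: fibre_def sum_cx_entry_mult)
  qed
  finally show "(\<Sum>i\<in>cx_columns n. character S i * x i) = 0" .
qed (use x in \<open>simp add: in_int_kernel_def\<close>)

text \<open>Conversely, \<open>2\<^bsup>|F|\<^esup>\<close> times the row \<open>(F, e)\<close> is \<open>\<Sum>\<^sub>T\<^sub>\<subseteq>\<^sub>F \<chi>\<^sub>T(e) \<chi>\<^sub>T\<close>, and every \<open>T \<subseteq> F\<close> is a face.\<close>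

lemma cx_kernel_if_character_kernel:
  assumes sc: "simplicial_complex n C" and x: "in_int_kernel C (cx_columns n) character x"
  shows "in_int_kernel (cx_rows C) (cx_columns n) cx_entry x"
  unfolding in_int_kernel_def
proof (intro conjI ballI)
  fix r assume "r \<in> cx_rows C"
  then obtain F e where r: "r = (F, e)" "F \<in> C" "e \<in> PiE F (\<lambda>_. {1::nat, 2})"
    by (auto simp: cx_rows_def facets_def)
  have F: "F \<subseteq> {1..n}" "finite F"
    using r(2) sc by (auto simp: simplicial_complex_def intro: finite_subset)
  have indicator: "(\<Sum>T\<in>Pow F. character T i * character T e) = (if restrict i F = e then 2 ^ card F else 0)"
    if "i \<in> cx_columns n" for i
  proof -
    have "(\<forall>k\<in>F. i k = e k) \<longleftrightarrow> restrict i F = e"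
      using r(3) by (auto simp: PiE_iff extensional_def restrict_def)
    moreover have "\<forall>k\<in>F. i k \<in> {1, 2}" using that F(1) by (auto simp: cx_columns_def PiE_iff)
    ultimately show ?thesis
      using sum_Pow_character_mult[OF F(2), of i e] r(3) by (simp add: PiE_iff)
  qed
  have "2 ^ card F * (\<Sum>i\<in>cx_columns n. cx_entry r i * x i)
      = (\<Sum>i\<in>cx_columns n. (if restrict i F = e then 2 ^ card F else 0) * x i)"
    unfolding r(1) sum_cx_entry_mult sum_distrib_left sum.inter_filter[OF finite_cx_columns]
    by (rule sum.cong) auto
  also have "\<dots> = (\<Sum>i\<in>cx_columns n. (\<Sum>T\<in>Pow F. character T i * character T e) * x i)"
    by (rule sum.cong) (simp_all add: indicator)
  also have "\<dots> = (\<Sum>T\<in>Pow F. character T e * (\<Sum>i\<in>cx_columns n. character T i * x i))"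
    by (simp add: sum_distrib_left sum_distrib_right sum.swap[of _ "Pow F"] algebra_simps)
  also have "\<dots> = 0"
    using x r(2) sc by (intro sum.neutral) (auto simp: in_int_kernel_def simplicial_complex_def)
  finally show "(\<Sum>i\<in>cx_columns n. cx_entry r i * x i) = 0" by simp
qed (use x in \<open>simp add: in_int_kernel_def\<close>)

lemma unimodular_complex_iff_characters:
  assumes "simplicial_complex n C"
  shows "unimodular_complex n C \<longleftrightarrow> unimodular_matrix C (cx_columns n) character"
  unfolding unimodular_complex_def
  using character_kernel_if_cx_kernel[OF assms] cx_kernel_if_character_kernel[OF assms]
  by (intro unimodular_matrix_kernel_cong) blast

lemma simplicial_complex_alexander_dual:
  assumes "simplicial_complex n C"
  shows "simplicial_complex n (alexander_dual n C)"
  using assms unfolding simplicial_complex_def alexander_dual_def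
  by auto (metis Diff_mono order_refl)

lemma alexander_dual_eq_image_complement:
  "alexander_dual n C = (\<lambda>T. {1..n} - T) ` (Pow {1..n} - C)"
proof (rule set_eqI)
  fix S
  have "S \<subseteq> {1..n} \<Longrightarrow> S = {1..n} - ({1..n} - S)" by auto
  then show "S \<in> alexander_dual n C \<longleftrightarrow> S \<in> (\<lambda>T. {1..n} - T) ` (Pow {1..n} - C)"
    by (auto simp: alexander_dual_def double_diff)
qed

text \<open>Since \<open>\<chi>\<^sub>T \<chi>\<^sub>[\<^sub>n\<^sub>] = \<chi>\<^sub>[\<^sub>n\<^sub>]\<^sub>-\<^sub>T\<close>, changing the signs of the coordinates by \<open>\<chi>\<^sub>[\<^sub>n\<^sub>]\<close> exchanges
  the character rows of the non-faces of \<open>\<C>\<close> with those of \<open>\<C>\<^sup>*\<close>.\<close>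

lemma in_int_kernel_alexander_dual_iff:
  "in_int_kernel (alexander_dual n C) (cx_columns n) character x \<longleftrightarrow>
   in_int_kernel (Pow {1..n} - C) (cx_columns n) character (\<lambda>c. character {1..n} c * x c)"
proof -
  have "(\<Sum>c\<in>cx_columns n. character T c * (character {1..n} c * x c))
      = (\<Sum>c\<in>cx_columns n. character ({1..n} - T) c * x c)" if "T \<subseteq> {1..n}" for T
    using character_mult_complement[OF that] by (simp add: mult.assoc[symmetric])
  moreover have "character {1..n} c * x c = 0 \<longleftrightarrow> x c = 0" for c
    using character_cases[of "{1..n}" c] by auto
  ultimately show ?thesis
    unfolding in_int_kernel_def alexander_dual_eq_image_complement by auto
qed

lemma unimodular_characters_alexander_dual_iff:
  "unimodular_matrix (alexander_dual n C) (cx_columns n) character \<longleftrightarrow>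
   unimodular_matrix (Pow {1..n} - C) (cx_columns n) character"
  by (rule unimodular_matrix_sign_twist_iff[OF in_int_kernel_alexander_dual_iff character_mult_self])

theorem proposition3p7:
  fixes n :: nat and C :: "nat set set"
  assumes "simplicial_complex n C"
  shows "unimodular_complex n C \<longleftrightarrow> unimodular_complex n (alexander_dual n C)"
proof -
  interpret scaled_orthogonal_matrix "cx_columns n" "Pow {1..n}" character "2 ^ n"
    by (rule scaled_orthogonal_matrix_characters)
  have C: "C \<subseteq> Pow {1..n}" using simplicial_complex_subset_Pow[OF assms] .
  then have "Pow {1..n} - (Pow {1..n} - C) = C" by auto
  then have "unimodular_matrix C (cx_columns n) character \<longleftrightarrow>
      unimodular_matrix (Pow {1..n} - C) (cx_columns n) character"
    using unimodular_matrix_complement[OF C] unimodular_matrix_complement[of "Pow {1..n} - C"] by auto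
  then show ?thesis
    using unimodular_complex_iff_characters[OF assms]
      unimodular_complex_iff_characters[OF simplicial_complex_alexander_dual[OF assms]]
      unimodular_characters_alexander_dual_iff by simp
qed

end
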